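(* Let $k\ge 1$ and $l\geq 1$ be integers and $n=2^k$. Then for every $1\leq s\leq 2^k$, $a_{l2^{k-1},s}+a_{l2^{k-1},s-2^{k-1}}\equiv 0\pmod{2^l}$.
   Context: Let $D:\mathbb{Z}^n\to\mathbb{Z}^n$, $D(x_1,\dots,x_n)=(x_1+x_2,x_2+x_3,\dots,x_n+x_1)$. For integers $r\ge 0$ and $1\le s\le n$, define the integers $a_{r,s}$ by $D^r(0,0,\dots,0,1)=(a_{r,n},a_{r,n-1},\dots,a_{r,1})$; equivalently, $a_{r,s}$ is the coefficient of $x_s$ in the first coordinate of $D^r(x_1,\dots,x_n)$. The second index is read modulo $n$ (representatives $1,\dots,n$). *)

theory Defs
  imports Main "HOL-Number_Theory.Cong"
begin

text \<open>Vectors in Z^n are modelled as functions int => int, of which only the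
coordinates 1..n matter; indices are read modulo n with representatives 1..n.\<close>

definition idx :: "nat \<Rightarrow> int \<Rightarrow> int" where
  "idx n i = (i - 1) mod int n + 1"

definition D :: "nat \<Rightarrow> (int \<Rightarrow> int) \<Rightarrow> (int \<Rightarrow> int)" where
  "D n x = (\<lambda>i. x (idx n i) + x (idx n (i + 1)))"

text \<open>a n r s: the coefficient of x_s in the first coordinate of D^r(x),
 i.e. the first coordinate of D^r applied to the s-th unit vector
 (second index read modulo n).\<close>
definition a :: "nat \<Rightarrow> nat \<Rightarrow> int \<Rightarrow> int" where
  "a n r s = ((D n ^^ r) (\<lambda>i. if idx n i = idx n s then 1 else 0)) 1"

end

theory Submission
  imports Defs
begin

text \<open>Let S be the shift f \<mapsto> f(\<cdot> + 1) of integer sequences, so that D acts on n-periodic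
sequences as 1 + S, and put m = 2^(k-1), n = 2m. The binomial coefficients C(m, j) with
0 < j < m are even, hence (1 + S)^m = 1 + S^m + 2H for an operator H commuting with S.
On n-periodic sequences S^(2m) = 1, so (1 + S^m)^2 = 2(1 + S^m) and therefore
(1 + S)^m (1 + S^m) = 2 (1 + S^m)(1 + H). Iterating l times gives
(1 + S)^(lm) (1 + S^m) = 2^l (1 + S^m)(1 + H)^l, and applying this to the s-th unit vector
and reading off the first coordinate yields a_(lm,s) + a_(lm,s-m).\<close>

definition Dinf :: "(int \<Rightarrow> int) \<Rightarrow> (int \<Rightarrow> int)" where
  "Dinf f = (\<lambda>i. f i + f (i + 1))"

definition add_shift :: "int \<Rightarrow> (int \<Rightarrow> int) \<Rightarrow> (int \<Rightarrow> int)" where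
  "add_shift m f = (\<lambda>i. f i + f (i + m))"

definition periodic :: "int \<Rightarrow> (int \<Rightarrow> int) \<Rightarrow> bool" where
  "periodic p f \<longleftrightarrow> (\<forall>i. f (i + p) = f i)"

lemma Dinf_pow_add: "(Dinf ^^ r) (\<lambda>i. f i + g i) = (\<lambda>i. (Dinf ^^ r) f i + (Dinf ^^ r) g i)"
  by (induction r) (auto simp: Dinf_def)

lemma Dinf_pow_cmult: "(Dinf ^^ r) (\<lambda>i. c * f i) = (\<lambda>i. c * (Dinf ^^ r) f i)"
  by (induction r) (auto simp: Dinf_def algebra_simps)

lemma Dinf_pow_shift: "(Dinf ^^ r) (\<lambda>i. f (i + c)) = (\<lambda>i. (Dinf ^^ r) f (i + c))"
  by (induction r) (auto simp: Dinf_def algebra_simps)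

lemma Dinf_pow_add_shift: "(Dinf ^^ r) (add_shift m f) = add_shift m ((Dinf ^^ r) f)"
  unfolding add_shift_def by (simp add: Dinf_pow_add Dinf_pow_shift)

lemma periodic_Dinf_pow:
  assumes "periodic p f"
  shows "periodic p ((Dinf ^^ r) f)"
proof -
  from assms have "(\<lambda>i. f (i + p)) = f"
    by (simp add: periodic_def)
  then have "(\<lambda>i. (Dinf ^^ r) f (i + p)) = (Dinf ^^ r) f"
    by (simp only: Dinf_pow_shift[symmetric])
  from fun_cong[OF this] show ?thesis
    by (simp add: periodic_def)
qed

lemma periodic_add_shift: "periodic p f \<Longrightarrow> periodic p (add_shift m f)"
  unfolding periodic_def add_shift_def by (metis add.assoc add.commute)

lemma add_shift_add_shift_periodic:
  assumes "periodic (2 * m) f"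
  shows "add_shift m (add_shift m f) = (\<lambda>i. 2 * add_shift m f i)"
proof
  fix i
  from assms have "f (i + m + m) = f i"
    unfolding periodic_def by (metis add.assoc mult_2)
  then show "add_shift m (add_shift m f) i = 2 * add_shift m f i"
    by (simp add: add_shift_def)
qed

lemma Dinf_pow_two_pow_mod_two: "2 dvd (Dinf ^^ 2 ^ t) f i - add_shift (2 ^ t) f i"
proof (induction t arbitrary: f i)
  case 0
  then show ?case by (simp add: Dinf_def add_shift_def)
next
  case (Suc t)
  define p :: int where "p = 2 ^ t"
  define E where "E = Dinf ^^ 2 ^ t"
  define h where "h = (\<lambda>i. (E f i - add_shift p f i) div 2)"
  have Ef: "E f = (\<lambda>i. add_shift p f i + 2 * h i)"
    using Suc.IH[of f] unfolding h_def E_def p_def by fastforce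
  have "(Dinf ^^ 2 ^ Suc t) f = E (E f)"
    unfolding E_def by (simp add: funpow_add mult_2)
  also have "\<dots> = E (\<lambda>i. add_shift p f i + 2 * h i)"
    by (simp only: Ef)
  also have "\<dots> = (\<lambda>i. add_shift p (E f) i + 2 * E h i)"
    by (simp add: E_def Dinf_pow_add Dinf_pow_cmult Dinf_pow_add_shift)
  also have "\<dots> = (\<lambda>i. add_shift (2 ^ Suc t) f i
      + 2 * (f (i + p) + add_shift p h i + E h i))"
    unfolding Ef by (simp add: add_shift_def p_def algebra_simps)
  finally show ?case by simp
qed

lemma Dinf_pow_add_shift_factor:
  assumes "periodic (2 * 2 ^ t) f"
  shows "\<exists>g. periodic (2 * 2 ^ t) g \<and>
    (Dinf ^^ (l * 2 ^ t)) (add_shift (2 ^ t) f) = (\<lambda>i. 2 ^ l * add_shift (2 ^ t) g i)"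
proof (induction l)
  case 0
  show ?case using assms by auto
next
  case (Suc l)
  define m :: int where "m = 2 ^ t"
  define E where "E = Dinf ^^ 2 ^ t"
  from Suc.IH obtain g where g_periodic: "periodic (2 * m) g"
    and g: "(Dinf ^^ (l * 2 ^ t)) (add_shift m f) = (\<lambda>i. 2 ^ l * add_shift m g i)"
    unfolding m_def by blast
  define h where "h = (\<lambda>i. (E g i - add_shift m g i) div 2)"
  have Eg: "E g = (\<lambda>i. add_shift m g i + 2 * h i)"
    using Dinf_pow_two_pow_mod_two[of t g] unfolding h_def E_def m_def by fastforce
  have "periodic (2 * m) h"
    using g_periodic periodic_Dinf_pow[of "2 * m" g] periodic_add_shift[of "2 * m" g]
    unfolding h_def E_def periodic_def by simp
  with g_periodic have gh_periodic: "periodic (2 * m) (\<lambda>i. g i + h i)"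
    by (simp add: periodic_def)
  have "(Dinf ^^ (Suc l * 2 ^ t)) (add_shift m f) = E (\<lambda>i. 2 ^ l * add_shift m g i)"
    unfolding E_def by (simp add: funpow_add g)
  also have "\<dots> = (\<lambda>i. 2 ^ l * add_shift m (E g) i)"
    by (simp add: E_def Dinf_pow_cmult Dinf_pow_add_shift)
  also have "\<dots> = (\<lambda>i. 2 ^ l * (add_shift m (add_shift m g) i + 2 * add_shift m h i))"
    by (simp add: Eg add_shift_def algebra_simps)
  also have "\<dots> = (\<lambda>i. 2 ^ Suc l * add_shift m (\<lambda>i. g i + h i) i)"
    unfolding add_shift_add_shift_periodic[OF g_periodic] by (simp add: add_shift_def algebra_simps)
  finally show ?case
    using gh_periodic unfolding m_def by (intro exI[of _ "\<lambda>i. g i + h i"] conjI)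
qed

lemma periodic_add_mult:
  assumes "periodic p f"
  shows "f (i + p * k) = f i"
proof -
  have nonneg: "f (j + p * int k') = f j" for j k'
  proof (induction k' arbitrary: j)
    case 0
    show ?case by simp
  next
    case (Suc k')
    have "f (j + p * int (Suc k')) = f ((j + p) + p * int k')"
      by (simp add: algebra_simps)
    also have "\<dots> = f (j + p)"
      by (rule Suc.IH)
    also have "\<dots> = f j"
      using assms by (simp add: periodic_def)
    finally show ?case .
  qed
  show ?thesis
  proof (cases "k \<ge> 0")
    case True
    then show ?thesis using nonneg[of i "nat k"] by simp
  next
    case False
    then show ?thesis using nonneg[of "i + p * k" "nat (- k)"] by simp
  qed
qed

lemma periodic_cong: "periodic p f \<Longrightarrow> [i = j] (mod p) \<Longrightarrow> f i = f j"
  by (metis cong_iff_lin periodic_add_mult)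

lemma idx_cong: "[idx n i = i] (mod int n)"
  by (simp add: idx_def cong_def mod_add_left_eq)

lemma idx_eq_iff: "idx n i = idx n j \<longleftrightarrow> [i = j] (mod int n)"
  by (simp add: idx_def cong_iff_dvd_diff mod_eq_dvd_iff)

lemma D_eq_Dinf: "periodic (int n) f \<Longrightarrow> D n f = Dinf f"
  unfolding D_def Dinf_def by (metis periodic_cong idx_cong)

lemma D_pow_eq_Dinf_pow: "periodic (int n) f \<Longrightarrow> (D n ^^ r) f = (Dinf ^^ r) f"
  by (induction r) (simp_all add: D_eq_Dinf periodic_Dinf_pow)

definition unit_vec :: "nat \<Rightarrow> int \<Rightarrow> int \<Rightarrow> int" where
  "unit_vec n s = (\<lambda>i. if idx n i = idx n s then 1 else 0)"

lemma a_eq_D_pow_unit_vec: "a n r s = (D n ^^ r) (unit_vec n s) 1"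
  by (simp add: a_def unit_vec_def)

lemma idx_add_self: "idx n (i + int n) = idx n i"
  by (simp add: idx_eq_iff cong_iff_dvd_diff)

lemma periodic_unit_vec: "periodic (int n) (unit_vec n s)"
  by (simp add: periodic_def unit_vec_def idx_add_self)

lemma unit_vec_diff: "unit_vec n (s - m) = (\<lambda>i. unit_vec n s (i + m))"
  by (simp add: unit_vec_def idx_eq_iff cong_iff_dvd_diff algebra_simps)

lemma a_add_a_diff_dvd:
  "2 ^ l dvd a (2 * 2 ^ t) (l * 2 ^ t) s + a (2 * 2 ^ t) (l * 2 ^ t) (s - 2 ^ t)"
proof -
  define n :: nat where "n = 2 * 2 ^ t"
  define m :: int where "m = 2 ^ t"
  define r where "r = l * 2 ^ t"
  have "periodic (2 * 2 ^ t) (unit_vec n s)"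
    using periodic_unit_vec[of n s] by (simp add: n_def)
  then obtain g where g: "(Dinf ^^ r) (add_shift m (unit_vec n s)) = (\<lambda>i. 2 ^ l * add_shift m g i)"
    using Dinf_pow_add_shift_factor unfolding r_def m_def by blast
  have "a n r s + a n r (s - m) = (Dinf ^^ r) (unit_vec n s) 1 + (Dinf ^^ r) (unit_vec n (s - m)) 1"
    by (simp add: a_eq_D_pow_unit_vec D_pow_eq_Dinf_pow periodic_unit_vec)
  also have "\<dots> = (Dinf ^^ r) (add_shift m (unit_vec n s)) 1"
    unfolding Dinf_pow_add_shift unit_vec_diff Dinf_pow_shift by (simp add: add_shift_def)
  also have "\<dots> = 2 ^ l * add_shift m g 1"
    by (simp add: g)
  finally show ?thesis
    unfolding n_def m_def r_def by simp
qed

theorem lemma4p6: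
  fixes k l :: nat and s :: int
  assumes "k \<ge> 1" and "l \<ge> 1"
    and "1 \<le> s" and "s \<le> 2 ^ k"
  shows "[a (2 ^ k) (l * 2 ^ (k - 1)) s + a (2 ^ k) (l * 2 ^ (k - 1)) (s - 2 ^ (k - 1)) = 0] (mod (2 ^ l))"
proof -
  from \<open>k \<ge> 1\<close> have "k = Suc (k - 1)"
    by simp
  then have "(2 :: nat) ^ k = 2 * 2 ^ (k - 1)"
    by (metis power_Suc)
  then show ?thesis
    using a_add_a_diff_dvd[of l "k - 1" s] by (simp add: cong_0_iff)
qed

end
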